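(* Let $\xi=(\tau_L,\delta_L,\tau_R,\delta_R)\in\Phi$. If $J_1(\xi)>1$ then $\phi(g(\xi))<0$.
   Context: Let $\Phi=\{\xi\in\mathbb{R}^4: \tau_L>\delta_L+1,\ \delta_L>0,\ \tau_R<-(\delta_R+1),\ \delta_R>0\}$. For $\xi\in\Phi$, the matrix $\begin{bmatrix}\tau_L&1\\-\delta_L&0\end{bmatrix}$ has real eigenvalues $0<\lambda_L^s<1<\lambda_L^u$ and $\begin{bmatrix}\tau_R&1\\-\delta_R&0\end{bmatrix}$ has real eigenvalues $\lambda_R^u<-1<\lambda_R^s<0$. Define $\phi(\xi)=\delta_R-\left(\tau_R+\delta_L+\delta_R-(1+\tau_R)\lambda_L^u\right)\lambda_L^u$ (with $\lambda_L^u$ computed from the first and second components of $\xi$), $J_1(\xi)=\frac{\lambda_L^u(\lambda_R^u)^2}{\lambda_L^u+|\lambda_R^u|}$, and $g:\Phi\to\Phi$, $g(\xi)=\left(\tau_R^2-2\delta_R,\ \delta_R^2,\ \tau_L\tau_R-\delta_L-\delta_R,\ \delta_L\delta_R\right)$. *)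

theory Defs
  imports Complex_Main
begin

type_synonym param = "real \<times> real \<times> real \<times> real"
  (* (tau_L, delta_L, tau_R, delta_R) *)

definition Phi :: "param set" where
  "Phi = {(tL, dL, tR, dR). tL > dL + 1 \<and> dL > 0 \<and> tR < -(dR + 1) \<and> dR > 0}"

text \<open>Eigenvalues of [[tau,1],[-delta,0]] are the roots of x^2 - tau x + delta = 0.
  The unstable left eigenvalue is the larger root (> 1), the unstable right eigenvalue
  is the smaller (more negative) root (< -1).\<close>
definition lamLu :: "real \<Rightarrow> real \<Rightarrow> real" where
  "lamLu tL dL = (tL + sqrt (tL^2 - 4 * dL)) / 2"

definition lamRu :: "real \<Rightarrow> real \<Rightarrow> real" where
  "lamRu tR dR = (tR - sqrt (tR^2 - 4 * dR)) / 2"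

definition phi :: "param \<Rightarrow> real" where
  "phi xi = (case xi of (tL, dL, tR, dR) \<Rightarrow>
     dR - (tR + dL + dR - (1 + tR) * lamLu tL dL) * lamLu tL dL)"

definition J1 :: "param \<Rightarrow> real" where
  "J1 xi = (case xi of (tL, dL, tR, dR) \<Rightarrow>
     lamLu tL dL * (lamRu tR dR)^2 / (lamLu tL dL + \<bar>lamRu tR dR\<bar>))"

definition g :: "param \<Rightarrow> param" where
  "g xi = (case xi of (tL, dL, tR, dR) \<Rightarrow>
     (tR^2 - 2 * dR, dR^2, tL * tR - dL - dR, dL * dR))"

end

theory Submission
  imports Defs
begin

text \<open>Write the eigenvalues as \<open>a = \<lambda>\<^sub>L\<^sup>u\<close>, \<open>b = \<lambda>\<^sub>L\<^sup>s\<close>, \<open>c = \<lambda>\<^sub>R\<^sup>u\<close>, \<open>d = \<lambda>\<^sub>R\<^sup>s\<close>,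
  so that \<open>\<xi> = (a + b, a b, c + d, c d)\<close>. Then \<open>g \<xi>\<close> has left trace \<open>c\<^sup>2 + d\<^sup>2\<close> and
  determinant \<open>c\<^sup>2 d\<^sup>2\<close>, so its unstable left eigenvalue is \<open>c\<^sup>2\<close>, and \<open>\<phi>(g \<xi>)\<close> becomes
  \<open>(c\<^sup>2 - 1)(T c\<^sup>2 - a b c d) + c\<^sup>4 (1 - d\<^sup>2)\<close> with \<open>T = \<tau>\<^sub>L \<tau>\<^sub>R - \<delta>\<^sub>L - \<delta>\<^sub>R < a c\<close>.
  The condition \<open>J\<^sub>1 > 1\<close> reads \<open>a (c\<^sup>2 - 1) > -c\<close>; it makes the first summand
  smaller than \<open>-c\<^sup>4\<close>, while the second is at most \<open>c\<^sup>4\<close>.\<close>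

lemma lamLu_add_lamRu: "lamLu t \<delta> + lamRu t \<delta> = t"
  by (simp add: lamLu_def lamRu_def field_simps)

lemma lamLu_mult_lamRu:
  assumes "4 * \<delta> \<le> t\<^sup>2"
  shows "lamLu t \<delta> * lamRu t \<delta> = \<delta>"
proof -
  have "(sqrt (t\<^sup>2 - 4 * \<delta>))\<^sup>2 = t\<^sup>2 - 4 * \<delta>"
    using assms by (simp add: real_sqrt_pow2)
  then show ?thesis
    by (simp add: lamLu_def lamRu_def field_simps power2_eq_square)
qed

lemma lamRu_le_lamLu:
  assumes "4 * \<delta> \<le> t\<^sup>2"
  shows "lamRu t \<delta> \<le> lamLu t \<delta>"
  using assms by (simp add: lamLu_def lamRu_def divide_right_mono)

lemma sqrt_sum_square_minus_prod: "sqrt ((x + y)\<^sup>2 - 4 * (x * y)) = \<bar>x - y\<bar>"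
proof -
  have "(x + y)\<^sup>2 - 4 * (x * y) = (x - y)\<^sup>2"
    by (simp add: power2_eq_square algebra_simps)
  then show ?thesis by simp
qed

lemma lamLu_sum_prod: "lamLu (x + y) (x * y) = max x y"
  by (simp add: lamLu_def sqrt_sum_square_minus_prod max_def)

lemma lamRu_sum_prod: "lamRu (x + y) (x * y) = min x y"
  by (simp add: lamRu_def sqrt_sum_square_minus_prod min_def)

lemma four_mult_le_square_if_add_one_le_abs:
  fixes t \<delta> :: real
  assumes "\<delta> + 1 \<le> \<bar>t\<bar>"
  shows "4 * \<delta> \<le> t\<^sup>2"
proof (cases "\<delta> \<le> 0")
  case False
  have "4 * \<delta> \<le> (\<delta> + 1)\<^sup>2"
    using zero_le_power2[of "\<delta> - 1"] by (simp add: power2_eq_square algebra_simps)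
  also have "\<dots> \<le> t\<^sup>2"
    using assms False by (simp add: abs_le_square_iff[symmetric])
  finally show ?thesis .
qed (simp add: order_trans[OF _ zero_le_power2])

lemma Phi_eigenvalue_param:
  assumes "xi \<in> Phi"
  obtains a b c d where "xi = (a + b, a * b, c + d, c * d)"
    and "0 < b" "b \<le> a" "c \<le> d" "d < 0"
proof -
  obtain tL dL tR dR where xi: "xi = (tL, dL, tR, dR)"
    by (cases xi) auto
  have bounds: "tL > dL + 1" "dL > 0" "tR < -(dR + 1)" "dR > 0"
    using assms by (auto simp: xi Phi_def)
  define a b c d where "a = lamLu tL dL" "b = lamRu tL dL" "c = lamRu tR dR" "d = lamLu tR dR"
  have sums: "tL = a + b" "tR = c + d"
    by (simp_all add: a_b_c_d_def lamLu_add_lamRu add.commute)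
  have discr: "4 * dL \<le> tL\<^sup>2" "4 * dR \<le> tR\<^sup>2"
    using bounds by (auto intro: four_mult_le_square_if_add_one_le_abs)
  then have prods: "dL = a * b" "dR = c * d"
    by (simp_all add: a_b_c_d_def lamLu_mult_lamRu mult.commute)
  have "0 < a * b" "0 < a + b" "0 < c * d" "c + d < 0"
    using bounds sums prods by auto
  then have "0 < b" "d < 0"
    by (auto simp: zero_less_mult_iff)
  moreover have "b \<le> a" "c \<le> d"
    using discr by (simp_all add: a_b_c_d_def lamRu_le_lamLu)
  ultimately show ?thesis
    using that xi sums prods by blast
qed

lemma J1_eigen:
  assumes "b \<le> a" "c \<le> d"
  shows "J1 (a + b, a * b, c + d, c * d) = a * c\<^sup>2 / (a + \<bar>c\<bar>)"
  using assms by (simp add: J1_def lamLu_sum_prod lamRu_sum_prod max_def min_def)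

lemma phi_g_eigen:
  assumes "d\<^sup>2 \<le> c\<^sup>2"
  shows "phi (g (a + b, a * b, c + d, c * d)) =
    (c\<^sup>2 - 1) * (((a + b) * (c + d) - a * b - c * d) * c\<^sup>2 - a * b * c * d) + c ^ 4 * (1 - d\<^sup>2)"
proof -
  have "g (a + b, a * b, c + d, c * d) =
      (c\<^sup>2 + d\<^sup>2, c\<^sup>2 * d\<^sup>2, (a + b) * (c + d) - a * b - c * d, a * b * (c * d))"
    by (simp add: g_def power2_eq_square algebra_simps)
  moreover have "lamLu (c\<^sup>2 + d\<^sup>2) (c\<^sup>2 * d\<^sup>2) = c\<^sup>2"
    using assms by (simp add: lamLu_sum_prod max_def)
  ultimately show ?thesis
    by (simp add: phi_def power2_eq_square power4_eq_xxxx algebra_simps)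
qed

lemma phi_g_eigen_neg:
  fixes a b c d :: real
  assumes "0 < a" "0 < b" "c \<le> d" "d < 0" and J: "a - c < a * c\<^sup>2"
  shows "phi (g (a + b, a * b, c + d, c * d)) < 0"
proof -
  have "c < 0" "d\<^sup>2 \<le> c\<^sup>2"
    using assms by (simp_all add: abs_le_square_iff[symmetric])
  define T where "T = (a + b) * (c + d) - a * b - c * d"
  have "T - a * c = a * d + b * c + b * d - a * b - c * d"
    by (simp add: T_def algebra_simps)
  moreover have "a * d < 0" "b * c < 0" "b * d < 0" "0 < a * b" "0 < c * d"
    using assms \<open>c < 0\<close> by (simp_all add: mult_pos_neg mult_neg_pos mult_neg_neg)
  ultimately have T: "T < a * c" by linarith
  have "a * 1 < a * c\<^sup>2"
    using J \<open>c < 0\<close> by simp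
  then have c2: "0 < c\<^sup>2 - 1"
    using \<open>0 < a\<close> by simp
  have "0 < a * b * (c * d)"
    using \<open>0 < a * b\<close> \<open>0 < c * d\<close> by simp
  then have "(c\<^sup>2 - 1) * (T * c\<^sup>2 - a * b * c * d) < (c\<^sup>2 - 1) * (T * c\<^sup>2)"
    using c2 by (simp add: mult.assoc)
  also have "\<dots> < (c\<^sup>2 - 1) * (a * c * c\<^sup>2)"
    using c2 T \<open>c < 0\<close> by (intro mult_strict_left_mono) auto
  also have "\<dots> = (a * (c\<^sup>2 - 1)) * c ^ 3"
    by (simp add: power2_eq_square power3_eq_cube algebra_simps)
  also have "\<dots> < (- c) * c ^ 3"
    using J \<open>c < 0\<close> by (intro mult_strict_right_mono_neg) (auto simp: algebra_simps)
  also have "\<dots> = - (c ^ 4)"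
    by (simp add: power3_eq_cube power4_eq_xxxx)
  finally have "(c\<^sup>2 - 1) * (T * c\<^sup>2 - a * b * c * d) < - (c ^ 4)" .
  moreover have "c ^ 4 * (1 - d\<^sup>2) \<le> c ^ 4"
    by (simp add: algebra_simps zero_le_even_power)
  ultimately show ?thesis
    unfolding phi_g_eigen[OF \<open>d\<^sup>2 \<le> c\<^sup>2\<close>] T_def by linarith
qed

theorem lemma5p2:
  assumes "xi \<in> Phi" and "J1 xi > 1"
  shows "phi (g xi) < 0"
proof -
  obtain a b c d where xi: "xi = (a + b, a * b, c + d, c * d)"
    and "0 < b" "b \<le> a" "c \<le> d" "d < 0"
    using Phi_eigenvalue_param[OF assms(1)] .
  then have "0 < a" "c < 0"
    by simp_all
  have "1 < a * c\<^sup>2 / (a + \<bar>c\<bar>)"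
    using assms(2) J1_eigen[OF \<open>b \<le> a\<close> \<open>c \<le> d\<close>] by (simp add: xi)
  then have "a - c < a * c\<^sup>2"
    using \<open>0 < a\<close> \<open>c < 0\<close> by (simp add: field_simps)
  then show ?thesis
    using phi_g_eigen_neg \<open>0 < a\<close> \<open>0 < b\<close> \<open>c \<le> d\<close> \<open>d < 0\<close> by (simp add: xi)
qed

end
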